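(* Let $S\subset\mathbb{R}^2$ be a set of at least $4$ points in general position and let $a,b,c\in S$ be distinct. If $ab$ is an exit edge of $S$ with witness $c$, then $ac$ is not an exit edge of $S$ with witness $b$, and $bc$ is not an exit edge of $S$ with witness $a$.
   Context: General position: no three points collinear. For distinct $a,b,c\in S$, the segment $ab$ is an exit edge of $S$ with witness $c$ if there is no $p\in S$ such that the line through $a$ and $p$ strictly separates $b$ from $c$, and there is no $p\in S$ such that the line through $b$ and $p$ strictly separates $a$ from $c$. *)

theory Defs
  imports "HOL-Analysis.Analysis"
begin

type_synonym point = "real \<times> real"

definition orient :: "point \<Rightarrow> point \<Rightarrow> point \<Rightarrow> real" where
  "orient p q r = (fst q - fst p) * (snd r - snd p) - (snd q - snd p) * (fst r - fst p)"

definition general_position :: "point set \<Rightarrow> bool" where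
  "general_position S \<longleftrightarrow>
     (\<forall>p\<in>S. \<forall>q\<in>S. \<forall>r\<in>S. p \<noteq> q \<and> q \<noteq> r \<and> p \<noteq> r \<longrightarrow> orient p q r \<noteq> 0)"

definition strictly_separates :: "point \<Rightarrow> point \<Rightarrow> point \<Rightarrow> point \<Rightarrow> bool" where
  "strictly_separates a p x y \<longleftrightarrow> a \<noteq> p \<and> orient a p x * orient a p y < 0"

definition exit_edge :: "point set \<Rightarrow> point \<Rightarrow> point \<Rightarrow> point \<Rightarrow> bool" where
  "exit_edge S a b c \<longleftrightarrow>
     a \<in> S \<and> b \<in> S \<and> c \<in> S \<and> a \<noteq> b \<and> b \<noteq> c \<and> a \<noteq> c \<and>
     \<not> (\<exists>p\<in>S. strictly_separates a p b c) \<and>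
     \<not> (\<exists>p\<in>S. strictly_separates b p a c)"

end

theory Submission
  imports Defs
begin

text \<open>Given a fourth point d of S, one of the lines da, db, dc separates the
  other two of a, b, c. An exit edge ab with witness c forbids the lines da and db from
  doing so; an exit edge ac (or bc) with the third point as witness forbids dc as well,
  so the two exit edges cannot coexist.\<close>

lemma orient_cyclic: "orient p q r = orient q r p"
  unfolding orient_def by algebra

lemma orient_swap: "orient p r q = - orient p q r"
  unfolding orient_def by algebra

lemma some_pairwise_product_pos:
  fixes x y z :: real
  assumes "x \<noteq> 0" "y \<noteq> 0" "z \<noteq> 0"
  shows "x * y > 0 \<or> y * z > 0 \<or> z * x > 0"
  using assms by (auto simp: zero_less_mult_iff)

lemma line_through_separates_other_two:
  assumes "orient d a b \<noteq> 0" "orient d b c \<noteq> 0" "orient d c a \<noteq> 0"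
  shows "orient a d b * orient a d c < 0 \<or> orient b d a * orient b d c < 0
       \<or> orient c d a * orient c d b < 0"
proof -
  have "orient a d b * orient a d c = - (orient d c a * orient d a b)"
    "orient b d a * orient b d c = - (orient d a b * orient d b c)"
    "orient c d a * orient c d b = - (orient d b c * orient d c a)"
    by (metis orient_cyclic orient_swap mult_minus_left mult_minus_right mult.commute)+
  with some_pairwise_product_pos[OF assms] show ?thesis by linarith
qed

lemma exists_not_in_smaller:
  assumes "finite A" "card A < card S"
  shows "\<exists>d\<in>S. d \<notin> A"
  using assms card_mono not_le by blast

lemma exit_edge_no_separating_line:
  assumes "exit_edge S a b c" "d \<in> S" "d \<noteq> a" "d \<noteq> b"
  shows "\<not> orient a d b * orient a d c < 0" "\<not> orient b d a * orient b d c < 0"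
  using assms unfolding exit_edge_def strictly_separates_def by auto

theorem mainTheorem3:
  fixes S :: "(real \<times> real) set" and a b c :: "real \<times> real"
  assumes "finite S" and "card S \<ge> 4"
    and "general_position S"
    and "a \<in> S" and "b \<in> S" and "c \<in> S"
    and "a \<noteq> b" and "b \<noteq> c" and "a \<noteq> c"
    and "exit_edge S a b c"
  shows "\<not> exit_edge S a c b \<and> \<not> exit_edge S b c a"
proof -
  have "card {a, b, c} \<le> 3"
    by (simp add: card_insert_if)
  then have "card {a, b, c} < card S"
    using \<open>card S \<ge> 4\<close> by linarith
  then obtain d where d: "d \<in> S" "d \<noteq> a" "d \<noteq> b" "d \<noteq> c"
    using exists_not_in_smaller[of "{a, b, c}" S] by auto
  have "orient d a b \<noteq> 0" "orient d b c \<noteq> 0" "orient d c a \<noteq> 0"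
    using \<open>general_position S\<close> d assms(4-9) unfolding general_position_def by metis+
  then have dc_separates: "orient c d a * orient c d b < 0"
    using line_through_separates_other_two exit_edge_no_separating_line[OF assms(10) d(1-3)]
    by blast
  show ?thesis
  proof (intro conjI notI)
    assume "exit_edge S a c b"
    then show False
      using exit_edge_no_separating_line(2)[OF _ d(1,2,4)] dc_separates by blast
  next
    assume "exit_edge S b c a"
    then show False
      using exit_edge_no_separating_line(2)[OF _ d(1,3,4)] dc_separates by (simp add: mult.commute)
  qed
qed

end
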